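(* Let $R$ be a multiplicative hyperring as in the context and let $I$ be a 1-absorbing prime hyperideal of $R$. Then $\sqrt{I}$ is a prime hyperideal of $R$. Moreover, for every nonunit element $z\in R\setminus I$, the set $(I:z)$ is a prime hyperideal of $R$.
   Context: Throughout, $R$ is a commutative multiplicative hyperring: $(R,+)$ is an abelian group and $\circ:R\times R\to P^*(R)$ (nonempty subsets of $R$) is a commutative, associative hyperoperation with $a\circ(b+c)\subseteq a\circ b+a\circ c$ and $a\circ(-b)=(-a)\circ b=-(a\circ b)$ for all $a,b,c$. For nonempty $A,B\subseteq R$, $A\circ B=\bigcup_{a\in A,b\in B}a\circ b$. $R$ has an identity $1$ (i.e. $a\in a\circ 1$ for all $a$); $x$ is a unit if $1\in x\circ y$ for some $y\in R$. A hyperideal is a nonempty $I\subseteq R$ with $a-b\in I$ and $r\circ a\subseteq I$ for all $a,b\in I$, $r\in R$. All hyperideals are assumed to be $\mathbf{C}$-hyperideals: for every finite product $A=r_1\circ\cdots\circ r_n$, $A\cap I\neq\emptyset$ implies $A\subseteq I$. A prime hyperideal is a proper hyperideal $P$ such that $x\circ y\subseteq P$ implies $x\in P$ or $y\in P$. $\sqrt{I}$ is the intersection of all prime hyperideals containing $I$ (and $R$ if there are none); under the $\mathbf{C}$-hyperideal assumption, $\sqrt{I}=\{r\in R: r^n\subseteq I \text{ for some } n\in\mathbb{N}\}$. For $a\in R$, $(I:a)=\{r\in R: r\circ a\subseteq I\}$. A proper hyperideal $I$ is 1-absorbing prime if for all nonunit $x,y,z\in R$, $x\circ y\circ z\subseteq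 I$ implies $x\circ y\subseteq I$ or $z\in I$. *)

theory Defs
  imports Main
begin

text \<open>A commutative multiplicative hyperring: the additive structure is the
  abelian group structure of the type 'a (carrier = UNIV), the hyperoperation
  is mul :: 'a => 'a => 'a set.\<close>

definition setmul :: "('a \<Rightarrow> 'a \<Rightarrow> 'a set) \<Rightarrow> 'a set \<Rightarrow> 'a set \<Rightarrow> 'a set" where
  "setmul mul A B = (\<Union>a\<in>A. \<Union>b\<in>B. mul a b)"

definition setplus :: "'a::ab_group_add set \<Rightarrow> 'a set \<Rightarrow> 'a set" where
  "setplus A B = {a + b | a b. a \<in> A \<and> b \<in> B}"

definition comm_mult_hyperring :: "('a::ab_group_add \<Rightarrow> 'a \<Rightarrow> 'a set) \<Rightarrow> bool" where
  "comm_mult_hyperring mul \<longleftrightarrow>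
     (\<forall>a b. mul a b \<noteq> {}) \<and>
     (\<forall>a b. mul a b = mul b a) \<and>
     (\<forall>a b c. setmul mul (mul a b) {c} = setmul mul {a} (mul b c)) \<and>
     (\<forall>a b c. mul a (b + c) \<subseteq> setplus (mul a b) (mul a c)) \<and>
     (\<forall>a b. mul a (- b) = uminus ` mul a b \<and> mul (- a) b = uminus ` mul a b)"

definition has_identity :: "('a \<Rightarrow> 'a \<Rightarrow> 'a set) \<Rightarrow> 'a \<Rightarrow> bool" where
  "has_identity mul one \<longleftrightarrow> (\<forall>a. a \<in> mul a one)"

definition hunit :: "('a \<Rightarrow> 'a \<Rightarrow> 'a set) \<Rightarrow> 'a \<Rightarrow> 'a \<Rightarrow> bool" where
  "hunit mul one x \<longleftrightarrow> (\<exists>y. one \<in> mul x y)"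

text \<open>Finite hyperproduct r1 o ... o rn of a nonempty list (empty list: not used).\<close>
fun hprod :: "('a \<Rightarrow> 'a \<Rightarrow> 'a set) \<Rightarrow> 'a list \<Rightarrow> 'a set" where
  "hprod mul [] = {}"
| "hprod mul [r] = {r}"
| "hprod mul (r # rs) = setmul mul {r} (hprod mul rs)"

definition hpow :: "('a \<Rightarrow> 'a \<Rightarrow> 'a set) \<Rightarrow> 'a \<Rightarrow> nat \<Rightarrow> 'a set" where
  "hpow mul r n = hprod mul (replicate n r)"

definition hyperideal :: "('a::ab_group_add \<Rightarrow> 'a \<Rightarrow> 'a set) \<Rightarrow> 'a set \<Rightarrow> bool" where
  "hyperideal mul I \<longleftrightarrow> I \<noteq> {} \<and> (\<forall>a\<in>I. \<forall>b\<in>I. a - b \<in> I) \<and>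
     (\<forall>r a. a \<in> I \<longrightarrow> mul r a \<subseteq> I)"

definition C_hyperideal :: "('a \<Rightarrow> 'a \<Rightarrow> 'a set) \<Rightarrow> 'a set \<Rightarrow> bool" where
  "C_hyperideal mul I \<longleftrightarrow>
     (\<forall>rs. rs \<noteq> [] \<longrightarrow> hprod mul rs \<inter> I \<noteq> {} \<longrightarrow> hprod mul rs \<subseteq> I)"

definition prime_hyperideal :: "('a::ab_group_add \<Rightarrow> 'a \<Rightarrow> 'a set) \<Rightarrow> 'a set \<Rightarrow> bool" where
  "prime_hyperideal mul P \<longleftrightarrow> hyperideal mul P \<and> P \<noteq> UNIV \<and>
     (\<forall>x y. mul x y \<subseteq> P \<longrightarrow> x \<in> P \<or> y \<in> P)"

text \<open>Radical: intersection of all prime hyperideals containing I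
  (Inter of the empty family is UNIV = R).\<close>
definition hrad :: "('a::ab_group_add \<Rightarrow> 'a \<Rightarrow> 'a set) \<Rightarrow> 'a set \<Rightarrow> 'a set" where
  "hrad mul I = \<Inter> {P. prime_hyperideal mul P \<and> I \<subseteq> P}"

definition hcolon :: "('a \<Rightarrow> 'a \<Rightarrow> 'a set) \<Rightarrow> 'a set \<Rightarrow> 'a \<Rightarrow> 'a set" where
  "hcolon mul I a = {r. mul r a \<subseteq> I}"

definition one_absorbing_prime ::
  "('a::ab_group_add \<Rightarrow> 'a \<Rightarrow> 'a set) \<Rightarrow> 'a \<Rightarrow> 'a set \<Rightarrow> bool" where
  "one_absorbing_prime mul one I \<longleftrightarrow> hyperideal mul I \<and> I \<noteq> UNIV \<and>
     (\<forall>x y z. \<not> hunit mul one x \<longrightarrow> \<not> hunit mul one y \<longrightarrow> \<not> hunit mul one z \<longrightarrow>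
        hprod mul [x, y, z] \<subseteq> I \<longrightarrow> hprod mul [x, y] \<subseteq> I \<or> z \<in> I)"

end

theory Submission
  imports Defs
begin

text \<open>If \<open>I\<close> is prime there is nothing to show for the radical. Otherwise pick
  \<open>a \<circ> b \<subseteq> I\<close> with \<open>a, b \<notin> I\<close>; both are nonunits. For a nonunit \<open>z \<notin> I\<close>,
  1-absorption applied to \<open>x \<circ> z \<circ> y\<close> makes \<open>(I : z)\<close> prime, and applied to
  \<open>c \<circ> c \<circ> a\<close> it shows that every \<open>c \<in> (I : a)\<close> has \<open>c \<circ> c \<subseteq> I\<close>. Hence the
  prime \<open>(I : a)\<close> lies in every prime containing \<open>I\<close>, so it is the radical.
  The radical is used as an intersection of primes.\<close>

locale unital_hyperring =
  fixes mul :: "'a::ab_group_add \<Rightarrow> 'a \<Rightarrow> 'a set" and one :: 'a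
  assumes hyperring: "comm_mult_hyperring mul"
    and identity: "has_identity mul one"
begin

lemma mul_commute: "mul a b = mul b a"
  using hyperring unfolding comm_mult_hyperring_def by simp

lemma mul_add_right: "mul a (b + c) \<subseteq> setplus (mul a b) (mul a c)"
  using hyperring unfolding comm_mult_hyperring_def by simp

lemma mul_minus_right: "mul a (- b) = uminus ` mul a b"
  using hyperring unfolding comm_mult_hyperring_def by simp

lemma setmul_assoc: "setmul mul (mul a b) {c} = setmul mul {a} (mul b c)"
  using hyperring unfolding comm_mult_hyperring_def by simp

lemma one_mul: "a \<in> mul one a"
  using identity mul_commute unfolding has_identity_def by metis

lemma setmul_singleton_left_commute:
  "setmul mul {x} (mul y z) = setmul mul {y} (mul x z)"
proof -
  have "setmul mul {x} (mul y z) = setmul mul (mul x y) {z}"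
    by (rule setmul_assoc[symmetric])
  also have "\<dots> = setmul mul (mul y x) {z}" by (simp add: mul_commute)
  also have "\<dots> = setmul mul {y} (mul x z)" by (rule setmul_assoc)
  finally show ?thesis .
qed

lemma setmul_singletons [simp]: "setmul mul {x} {y} = mul x y"
  by (simp add: setmul_def)

lemma setmul_subset_hyperideal:
  assumes "hyperideal mul I" "S \<subseteq> I" shows "setmul mul A S \<subseteq> I"
  using assms unfolding hyperideal_def setmul_def by blast

lemma hyperideal_cancel_unit:
  assumes I: "hyperideal mul I" and u: "hunit mul one x"
    and S: "setmul mul {x} S \<subseteq> I"
  shows "S \<subseteq> I"
proof
  fix s assume s: "s \<in> S"
  obtain x' where "one \<in> mul x' x" using u mul_commute unfolding hunit_def by metis
  then have "s \<in> setmul mul (mul x' x) {s}"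
    using one_mul unfolding setmul_def by blast
  also have "\<dots> = setmul mul {x'} (mul x s)" by (rule setmul_assoc)
  also have "\<dots> \<subseteq> I"
    using S s by (intro setmul_subset_hyperideal[OF I]) (auto simp: setmul_def)
  finally show "s \<in> I" .
qed

lemma hyperideal_cancel_unit_singleton:
  assumes "hyperideal mul I" "hunit mul one x" "mul x y \<subseteq> I"
  shows "y \<in> I"
  using hyperideal_cancel_unit[of I x "{y}"] assms by (simp add: setmul_def)

lemma subset_hcolon:
  assumes "hyperideal mul I" shows "I \<subseteq> hcolon mul I a"
  using assms mul_commute unfolding hcolon_def hyperideal_def by blast

lemma hcolon_proper:
  assumes "z \<notin> I" shows "hcolon mul I z \<noteq> UNIV"
  using assms one_mul unfolding hcolon_def by blast

lemma hyperideal_hcolon: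
  assumes I: "hyperideal mul I" shows "hyperideal mul (hcolon mul I z)"
proof -
  have diff: "a - b \<in> hcolon mul I z"
    if a: "a \<in> hcolon mul I z" and b: "b \<in> hcolon mul I z" for a b
  proof -
    have "mul (a - b) z \<subseteq> setplus (mul z a) (mul z (- b))"
      using mul_add_right[of z a "- b"] by (simp add: mul_commute)
    also have "\<dots> \<subseteq> I"
    proof
      fix t assume "t \<in> setplus (mul z a) (mul z (- b))"
      then obtain p q where "t = p - q" "p \<in> mul z a" "q \<in> mul z b"
        unfolding setplus_def mul_minus_right by auto
      moreover have "mul z a \<subseteq> I" "mul z b \<subseteq> I"
        using a b mul_commute unfolding hcolon_def by auto
      ultimately show "t \<in> I" using I unfolding hyperideal_def by blast
    qed
    finally show ?thesis unfolding hcolon_def by blast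
  qed
  have absorb: "mul r a \<subseteq> hcolon mul I z" if a: "a \<in> hcolon mul I z" for r a
  proof
    fix t assume "t \<in> mul r a"
    then have "mul t z \<subseteq> setmul mul (mul r a) {z}" unfolding setmul_def by blast
    also have "\<dots> = setmul mul {r} (mul a z)" by (rule setmul_assoc)
    also have "\<dots> \<subseteq> I" using a setmul_subset_hyperideal[OF I] unfolding hcolon_def by blast
    finally show "t \<in> hcolon mul I z" unfolding hcolon_def by blast
  qed
  show ?thesis
    using subset_hcolon[OF I] I diff absorb unfolding hyperideal_def by blast
qed

lemma one_absorbing_prime_hyperideal:
  "one_absorbing_prime mul one I \<Longrightarrow> hyperideal mul I"
  unfolding one_absorbing_prime_def by blast

lemma prime_hcolon_of_one_absorbing:
  assumes A: "one_absorbing_prime mul one I"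
    and z: "\<not> hunit mul one z" "z \<notin> I"
  shows "prime_hyperideal mul (hcolon mul I z)"
proof -
  have I: "hyperideal mul I" using A by (rule one_absorbing_prime_hyperideal)
  have "x \<in> hcolon mul I z \<or> y \<in> hcolon mul I z"
    if xy: "mul x y \<subseteq> hcolon mul I z" for x y
  proof -
    have "setmul mul (mul x y) {z} \<subseteq> I"
      using xy unfolding hcolon_def setmul_def by blast
    then have xyz: "setmul mul {x} (mul y z) \<subseteq> I" by (simp add: setmul_assoc)
    then have yxz: "setmul mul {y} (mul x z) \<subseteq> I"
      by (simp add: setmul_singleton_left_commute)
    consider "hunit mul one x" | "hunit mul one y"
      | "\<not> hunit mul one x" "\<not> hunit mul one y" by blast
    then show ?thesis
    proof cases
      case 1
      then show ?thesis
        using hyperideal_cancel_unit[OF I _ xyz] mul_commute unfolding hcolon_def by auto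
    next
      case 2
      then show ?thesis
        using hyperideal_cancel_unit[OF I _ yxz] mul_commute unfolding hcolon_def by auto
    next
      case 3
      have "hprod mul [x, z, y] \<subseteq> I"
        using xyz by (simp add: mul_commute)
      then have "hprod mul [x, z] \<subseteq> I \<or> y \<in> I"
        using A 3 z unfolding one_absorbing_prime_def by blast
      then show ?thesis
        using subset_hcolon[OF I] unfolding hcolon_def by auto
    qed
  qed
  then show ?thesis
    unfolding prime_hyperideal_def
    using hyperideal_hcolon[OF I] hcolon_proper[OF z(2)] by blast
qed

lemma hrad_prime_hyperideal_eq:
  "prime_hyperideal mul I \<Longrightarrow> hrad mul I = I"
  unfolding hrad_def by blast

lemma hrad_eq_hcolon_of_one_absorbing:
  assumes A: "one_absorbing_prime mul one I"
    and ab: "mul a b \<subseteq> I" "a \<notin> I" "b \<notin> I"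
  shows "hrad mul I = hcolon mul I a"
proof
  have I: "hyperideal mul I" using A by (rule one_absorbing_prime_hyperideal)
  have na: "\<not> hunit mul one a"
    using hyperideal_cancel_unit_singleton[OF I] ab by blast
  then have "prime_hyperideal mul (hcolon mul I a)"
    using prime_hcolon_of_one_absorbing[OF A] ab by blast
  then show "hrad mul I \<subseteq> hcolon mul I a"
    using subset_hcolon[OF I] unfolding hrad_def by blast
  show "hcolon mul I a \<subseteq> hrad mul I"
  proof
    fix c assume "c \<in> hcolon mul I a"
    then have ca: "mul c a \<subseteq> I" unfolding hcolon_def by blast
    have nc: "\<not> hunit mul one c"
      using hyperideal_cancel_unit_singleton[OF I _ ca] ab by blast
    have "hprod mul [c, c, a] \<subseteq> I"
      using setmul_subset_hyperideal[OF I ca] by simp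
    then have "hprod mul [c, c] \<subseteq> I \<or> a \<in> I"
      using A nc na unfolding one_absorbing_prime_def by blast
    then have "mul c c \<subseteq> I" using ab by simp
    then show "c \<in> hrad mul I"
      unfolding hrad_def prime_hyperideal_def by blast
  qed
qed

lemma prime_hrad_of_one_absorbing:
  assumes A: "one_absorbing_prime mul one I"
  shows "prime_hyperideal mul (hrad mul I)"
proof (cases "prime_hyperideal mul I")
  case True
  then show ?thesis by (simp add: hrad_prime_hyperideal_eq)
next
  case False
  then obtain a b where ab: "mul a b \<subseteq> I" "a \<notin> I" "b \<notin> I"
    using A unfolding one_absorbing_prime_def prime_hyperideal_def by blast
  have I: "hyperideal mul I" using A by (rule one_absorbing_prime_hyperideal)
  have "\<not> hunit mul one a"
    using hyperideal_cancel_unit_singleton[OF I] ab by blast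
  then show ?thesis
    using hrad_eq_hcolon_of_one_absorbing[OF A ab] prime_hcolon_of_one_absorbing[OF A] ab
    by simp
qed

end

theorem mainTheorem1:
  fixes mul :: "'a::ab_group_add \<Rightarrow> 'a \<Rightarrow> 'a set" and one :: 'a and I :: "'a set"
  assumes "comm_mult_hyperring mul"
    and "has_identity mul one"
    and "\<And>J. hyperideal mul J \<Longrightarrow> C_hyperideal mul J"
    and "one_absorbing_prime mul one I"
  shows "prime_hyperideal mul (hrad mul I) \<and>
         (\<forall>z. \<not> hunit mul one z \<longrightarrow> z \<notin> I \<longrightarrow> prime_hyperideal mul (hcolon mul I z))"
proof -
  interpret unital_hyperring mul one
    using assms(1,2) by unfold_locales
  show ?thesis
    using prime_hrad_of_one_absorbing[OF assms(4)]
      prime_hcolon_of_one_absorbing[OF assms(4)] by blast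
qed

end
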